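(* Let $m\ge 3$. Let $X_1,\dots,X_m,Y_1,\dots,Y_m\in\mathbb{C}^n$ and $\alpha_1,\dots,\alpha_m\in\mathbb{Z}_{\ge0}^n$, and for a point $Z=(z_1,\dots,z_n)$ and $\alpha=(\alpha_{1},\dots,\alpha_{n})$ write $Z^{\alpha}=z_1^{\alpha_1}\cdots z_n^{\alpha_n}$. Let $$V_m^{(1)}=\det\big(X_i^{\alpha_j}\big)_{i,j=1}^m,\qquad V_m^{(2)}=\det\big(Y_i^{\alpha_j}\big)_{i,j=1}^m,$$ $$M=\max_{i,j}\{|X_i^{\alpha_j}|,|Y_i^{\alpha_j}|\},$$ $$B=\max_{i,j,k}\Big\{|X_i^{\alpha_j}-X_i^{\alpha_k}|,\ |X_j^{\alpha_i}-X_k^{\alpha_i}|,\ |Y_i^{\alpha_j}-Y_i^{\alpha_k}|,\ |Y_j^{\alpha_i}-Y_k^{\alpha_i}|\Big\},$$ $$\varepsilon=\max_{i,j}|X_i^{\alpha_j}-Y_i^{\alpha_j}|,$$ with all indices ranging over $1,\dots,m$. Then $$|V_m^{(1)}-V_m^{(2)}|\le m\cdot m!\,M^{m-2}B\,\varepsilon.$$ *)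

theory Defs
  imports Complex_Main "Jordan_Normal_Form.Determinant"
begin

text \<open>Points of C^n are functions nat => complex (only coordinates 0..n-1 matter),
  multi-indices are functions nat => nat. Z^alpha = prod_{k<n} z_k^{alpha_k}.\<close>
definition mpow :: "nat \<Rightarrow> (nat \<Rightarrow> complex) \<Rightarrow> (nat \<Rightarrow> nat) \<Rightarrow> complex" where
  "mpow n Z \<alpha> = (\<Prod>k<n. Z k ^ \<alpha> k)"

definition gvmat :: "nat \<Rightarrow> nat \<Rightarrow> (nat \<Rightarrow> nat \<Rightarrow> complex) \<Rightarrow> (nat \<Rightarrow> nat \<Rightarrow> nat) \<Rightarrow> complex mat" where
  "gvmat n m Z \<alpha> = mat m m (\<lambda>(i,j). mpow n (Z i) (\<alpha> j))"

end

theory Submission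
  imports Defs
begin

text \<open>Replace the rows of the first matrix by those of the second one, one row at a time.
  By Laplace expansion along the replaced row k, each replacement changes the determinant by
  \<open>\<Sum>j. (a_kj - c_kj) C_kj\<close>, where the cofactors \<open>C_kj\<close> are minors of a matrix whose rows come
  from either matrix. Subtracting one column of such a minor from another makes that column
  bounded by B while all other entries stay bounded by M, so the Leibniz formula bounds the
  minor by \<open>(m-1)! M^(m-2) B\<close>. Summing the \<open>m^2\<close> terms, each at most \<open>\<epsilon> (m-1)! M^(m-2) B\<close>,
  gives the claim.\<close>

definition bounded_entries :: "real \<Rightarrow> 'a :: real_normed_vector mat \<Rightarrow> bool" where
  "bounded_entries M A \<longleftrightarrow> (\<forall>i < dim_row A. \<forall>j < dim_col A. norm (A $$ (i,j)) \<le> M)"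

definition bounded_row_differences :: "real \<Rightarrow> 'a :: real_normed_vector mat \<Rightarrow> bool" where
  "bounded_row_differences B A \<longleftrightarrow>
     (\<forall>i < dim_row A. \<forall>j < dim_col A. \<forall>j' < dim_col A. norm (A $$ (i,j) - A $$ (i,j')) \<le> B)"

lemma det_norm_le_column_bounds:
  fixes A :: "'a :: real_normed_field mat"
  assumes A: "A \<in> carrier_mat n n"
    and bound: "\<And>i j. i < n \<Longrightarrow> j < n \<Longrightarrow> norm (A $$ (i,j)) \<le> b j"
  shows "norm (det A) \<le> fact n * (\<Prod>j = 0..<n. b j)"
proof -
  let ?P = "{p. p permutes {0..<n}}"
  have term_bound: "norm (signof p * (\<Prod>i = 0..<n. A $$ (i, p i))) \<le> (\<Prod>j = 0..<n. b j)"
    if p: "p permutes {0..<n}" for p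
  proof -
    have "norm (signof p * (\<Prod>i = 0..<n. A $$ (i, p i))) = (\<Prod>i = 0..<n. norm (A $$ (i, p i)))"
      by (simp add: sign_def norm_mult prod_norm)
    also have "\<dots> \<le> (\<Prod>i = 0..<n. b (p i))"
      using bound permutes_in_image[OF p] by (intro prod_mono) auto
    also have "\<dots> = (\<Prod>j = 0..<n. b j)"
      using prod.permute[OF p, of b] by simp
    finally show ?thesis .
  qed
  have "norm (det A) \<le> (\<Sum>p \<in> ?P. norm (signof p * (\<Prod>i = 0..<n. A $$ (i, p i))))"
    unfolding det_def'[OF A] by (rule norm_sum)
  also have "\<dots> \<le> (\<Sum>p \<in> ?P. \<Prod>j = 0..<n. b j)"
    using term_bound by (intro sum_mono) simp
  also have "\<dots> = fact n * (\<Prod>j = 0..<n. b j)"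
    by (simp add: card_permutations)
  finally show ?thesis .
qed

lemma det_norm_le_row_differences:
  fixes A :: "'a :: real_normed_field mat"
  assumes A: "A \<in> carrier_mat n n" and n: "2 \<le> n"
    and M: "bounded_entries M A" and B: "bounded_row_differences B A"
  shows "norm (det A) \<le> fact n * M ^ (n - 1) * B"
proof -
  define A' where "A' = addcol (-1) 1 0 A"
  have A': "A' \<in> carrier_mat n n"
    using A unfolding A'_def mat_addcol_def by auto
  have "det A = det A'"
    unfolding A'_def using A n by (intro det_addcol[symmetric]) auto
  also have "norm (det A') \<le> fact n * (\<Prod>j = 0..<n. if j = 1 then B else M)"
  proof (rule det_norm_le_column_bounds[OF A'])
    fix i j assume "i < n" "j < n"
    then show "norm (A' $$ (i,j)) \<le> (if j = 1 then B else M)"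
      using A n M B unfolding A'_def bounded_entries_def bounded_row_differences_def by auto
  qed
  also have "(\<Prod>j = 0..<n. if j = 1 then B else M) = B * M ^ (n - 1)"
    using n by (simp add: prod.If_cases Int_absorb2 Diff_eq[symmetric])
  finally show ?thesis
    by (simp add: ac_simps)
qed

lemma bounded_entries_mat_delete:
  assumes "bounded_entries M A"
  shows "bounded_entries M (mat_delete A k l)"
  using assms unfolding bounded_entries_def mat_delete_def by auto

lemma bounded_row_differences_mat_delete:
  assumes "bounded_row_differences B A"
  shows "bounded_row_differences B (mat_delete A k l)"
  using assms unfolding bounded_row_differences_def mat_delete_def by auto

definition row_hybrid :: "'a mat \<Rightarrow> 'a mat \<Rightarrow> nat \<Rightarrow> 'a mat" where
  "row_hybrid A C k = mat (dim_row A) (dim_col A) (\<lambda>(i,j). if i < k then C $$ (i,j) else A $$ (i,j))"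

lemma row_hybrid_carrier: "row_hybrid A C k \<in> carrier_mat (dim_row A) (dim_col A)"
  unfolding row_hybrid_def by simp

lemma row_hybrid_0: "row_hybrid A C 0 = A"
  unfolding row_hybrid_def by (rule eq_matI) auto

lemma row_hybrid_dim_row:
  assumes "C \<in> carrier_mat (dim_row A) (dim_col A)"
  shows "row_hybrid A C (dim_row A) = C"
  using assms unfolding row_hybrid_def by (intro eq_matI) auto

lemma bounded_entries_row_hybrid:
  assumes "C \<in> carrier_mat (dim_row A) (dim_col A)"
    and "bounded_entries M A" and "bounded_entries M C"
  shows "bounded_entries M (row_hybrid A C k)"
  using assms unfolding bounded_entries_def row_hybrid_def by auto

lemma bounded_row_differences_row_hybrid:
  assumes "C \<in> carrier_mat (dim_row A) (dim_col A)"
    and "bounded_row_differences B A" and "bounded_row_differences B C"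
  shows "bounded_row_differences B (row_hybrid A C k)"
  using assms unfolding bounded_row_differences_def row_hybrid_def by auto

lemma det_row_hybrid_diff:
  fixes A C :: "'a :: comm_ring_1 mat"
  assumes A: "A \<in> carrier_mat m m" and C: "C \<in> carrier_mat m m" and k: "k < m"
  shows "det (row_hybrid A C k) - det (row_hybrid A C (Suc k))
           = (\<Sum>j<m. (A $$ (k,j) - C $$ (k,j)) * cofactor (row_hybrid A C k) k j)"
proof -
  let ?H = "row_hybrid A C"
  have H: "?H l \<in> carrier_mat m m" for l
    using row_hybrid_carrier[of A C l] A by simp
  have same_cofactor: "cofactor (?H (Suc k)) k j = cofactor (?H k) k j" for j
  proof -
    have "mat_delete (?H (Suc k)) k j = mat_delete (?H k) k j"
      using A unfolding mat_delete_def row_hybrid_def by (intro eq_matI) auto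
    then show ?thesis
      unfolding cofactor_def by simp
  qed
  have "?H k $$ (k,j) = A $$ (k,j)" "?H (Suc k) $$ (k,j) = C $$ (k,j)" if "j < m" for j
    using A k that unfolding row_hybrid_def by auto
  then have "det (?H k) = (\<Sum>j<m. A $$ (k,j) * cofactor (?H k) k j)"
    and "det (?H (Suc k)) = (\<Sum>j<m. C $$ (k,j) * cofactor (?H k) k j)"
    using laplace_expansion_row[OF H k] by (simp_all add: same_cofactor)
  then show ?thesis
    by (simp add: sum_subtractf[symmetric] left_diff_distrib)
qed

lemma det_diff_eq_sum_cofactors:
  fixes A C :: "'a :: comm_ring_1 mat"
  assumes A: "A \<in> carrier_mat m m" and C: "C \<in> carrier_mat m m"
  shows "det A - det C
           = (\<Sum>k<m. \<Sum>j<m. (A $$ (k,j) - C $$ (k,j)) * cofactor (row_hybrid A C k) k j)"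
proof -
  have "det A - det C = (\<Sum>k<m. det (row_hybrid A C k) - det (row_hybrid A C (Suc k)))"
    using sum_lessThan_telescope'[of "\<lambda>k. det (row_hybrid A C k)" m] A C
      row_hybrid_0[of A C] row_hybrid_dim_row[of C A] by simp
  then show ?thesis
    using det_row_hybrid_diff[OF A C] by simp
qed

lemma norm_cofactor_le_row_differences:
  fixes A :: "'a :: real_normed_field mat"
  assumes A: "A \<in> carrier_mat m m" and m: "3 \<le> m"
    and M: "bounded_entries M A" and B: "bounded_row_differences B A"
  shows "norm (cofactor A i j) \<le> fact (m - 1) * M ^ (m - 2) * B"
proof -
  have "norm (cofactor A i j) = norm (det (mat_delete A i j))"
    unfolding cofactor_def by (simp add: norm_mult norm_power)
  also have "\<dots> \<le> fact (m - 1) * M ^ (m - 1 - 1) * B"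
    using mat_delete_carrier[OF A] m bounded_entries_mat_delete[OF M]
      bounded_row_differences_mat_delete[OF B]
    by (intro det_norm_le_row_differences) auto
  finally show ?thesis
    by (simp add: numeral_2_eq_2)
qed

lemma norm_det_diff_le:
  fixes A C :: "'a :: real_normed_field mat"
  assumes A: "A \<in> carrier_mat m m" and C: "C \<in> carrier_mat m m" and m: "3 \<le> m"
    and "bounded_entries M A" "bounded_entries M C"
    and "bounded_row_differences B A" "bounded_row_differences B C"
    and close: "\<And>i j. i < m \<Longrightarrow> j < m \<Longrightarrow> norm (A $$ (i,j) - C $$ (i,j)) \<le> \<epsilon>"
  shows "norm (det A - det C) \<le> real m * fact m * M ^ (m - 2) * B * \<epsilon>"
proof -
  define K where "K = fact (m - 1) * M ^ (m - 2) * B"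
  have cofactor_bound: "norm (cofactor (row_hybrid A C k) k j) \<le> K" for k j
    unfolding K_def using A C m assms(4-7) row_hybrid_carrier[of A C k]
    by (intro norm_cofactor_le_row_differences)
      (auto intro: bounded_entries_row_hybrid bounded_row_differences_row_hybrid)
  have "0 \<le> \<epsilon>"
    using close[of 0 0] m by (meson norm_ge_zero order_trans zero_less_numeral less_le_trans)
  have "norm (det A - det C)
          \<le> (\<Sum>k<m. \<Sum>j<m. norm ((A $$ (k,j) - C $$ (k,j)) * cofactor (row_hybrid A C k) k j))"
    unfolding det_diff_eq_sum_cofactors[OF A C]
    by (rule order_trans[OF norm_sum sum_mono[OF norm_sum]])
  also have "\<dots> \<le> (\<Sum>k<m. \<Sum>j<m. \<epsilon> * K)"
    unfolding norm_mult using close cofactor_bound \<open>0 \<le> \<epsilon>\<close>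
    by (intro sum_mono mult_mono) auto
  also have "\<dots> = real m * (real m * fact (m - 1)) * M ^ (m - 2) * B * \<epsilon>"
    unfolding K_def by (simp add: algebra_simps)
  also have "real m * fact (m - 1) = fact m"
    using m by (simp add: fact_reduce)
  finally show ?thesis .
qed

lemma finite_image_set3:
  "finite {x. P x} \<Longrightarrow> finite {y. Q y} \<Longrightarrow> finite {z. R z}
    \<Longrightarrow> finite {f x y z |x y z. P x \<and> Q y \<and> R z}"
  by (rule finite_subset [where B = "\<Union>x \<in> {x. P x}. \<Union>y \<in> {y. Q y}. \<Union>z \<in> {z. R z}. {f x y z}"])
    auto

theorem theorem4:
  fixes n m :: nat and X Y :: "nat \<Rightarrow> nat \<Rightarrow> complex" and \<alpha> :: "nat \<Rightarrow> nat \<Rightarrow> nat"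
    and M B \<epsilon> :: real
  assumes "m \<ge> 3"
    and "M = Max ({cmod (mpow n (X i) (\<alpha> j)) | i j. i < m \<and> j < m}
                 \<union> {cmod (mpow n (Y i) (\<alpha> j)) | i j. i < m \<and> j < m})"
    and "B = Max ({cmod (mpow n (X i) (\<alpha> j) - mpow n (X i) (\<alpha> k)) | i j k. i < m \<and> j < m \<and> k < m}
                 \<union> {cmod (mpow n (X j) (\<alpha> i) - mpow n (X k) (\<alpha> i)) | i j k. i < m \<and> j < m \<and> k < m}
                 \<union> {cmod (mpow n (Y i) (\<alpha> j) - mpow n (Y i) (\<alpha> k)) | i j k. i < m \<and> j < m \<and> k < m}
                 \<union> {cmod (mpow n (Y j) (\<alpha> i) - mpow n (Y k) (\<alpha> i)) | i j k. i < m \<and> j < m \<and> k < m})"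
    and "\<epsilon> = Max {cmod (mpow n (X i) (\<alpha> j) - mpow n (Y i) (\<alpha> j)) | i j. i < m \<and> j < m}"
  shows "cmod (det (gvmat n m X \<alpha>) - det (gvmat n m Y \<alpha>))
           \<le> real m * fact m * M ^ (m - 2) * B * \<epsilon>"
proof -
  let ?A = "gvmat n m X \<alpha>" and ?C = "gvmat n m Y \<alpha>"
  let ?x = "\<lambda>i j. mpow n (X i) (\<alpha> j)" and ?y = "\<lambda>i j. mpow n (Y i) (\<alpha> j)"
  have fin2: "finite {f i j | i j. i < m \<and> j < m}" for f :: "nat \<Rightarrow> nat \<Rightarrow> real"
    by (rule finite_image_set2) auto
  have fin3: "finite {f i j k | i j k. i < m \<and> j < m \<and> k < m}"
    for f :: "nat \<Rightarrow> nat \<Rightarrow> nat \<Rightarrow> real"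
    by (rule finite_image_set3) auto
  have carrier: "?A \<in> carrier_mat m m" "?C \<in> carrier_mat m m"
    unfolding gvmat_def by auto
  have entries: "?A $$ (i,j) = ?x i j" "?C $$ (i,j) = ?y i j" if "i < m" "j < m" for i j
    using that unfolding gvmat_def by auto
  have "cmod (?x i j) \<le> M" "cmod (?y i j) \<le> M" if "i < m" "j < m" for i j
    unfolding assms(2) using that
    by - (rule Max_ge, simp only: finite_Un fin2 simp_thms, blast)+
  then have "bounded_entries M ?A" "bounded_entries M ?C"
    using carrier unfolding bounded_entries_def by (auto simp: entries)
  have "cmod (?x i j - ?x i k) \<le> B" "cmod (?y i j - ?y i k) \<le> B"
    if "i < m" "j < m" "k < m" for i j k
    unfolding assms(3) using that
    by - (rule Max_ge, simp only: finite_Un fin3 simp_thms, blast)+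
  then have "bounded_row_differences B ?A" "bounded_row_differences B ?C"
    using carrier unfolding bounded_row_differences_def by (auto simp: entries)
  have "cmod (?A $$ (i,j) - ?C $$ (i,j)) \<le> \<epsilon>" if "i < m" "j < m" for i j
    unfolding assms(4) entries[OF that] using that
    by - (rule Max_ge, simp only: fin2, blast)
  show ?thesis
    by (rule norm_det_diff_le[OF carrier assms(1)]) fact+
qed

end
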